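(* Consider a discrete memoryless wiretap channel with finite input alphabet $\mathcal{X}$, finite output alphabets $\mathcal{Y},\mathcal{Z}$, main channel $p(y|x)$ and eavesdropper channel $p(z|x)$. For $\mu\ge 0$ let $$\Phi(\mu)=\sup\ \big[\mu I(V;Y)+I(V;Y|U)-I(V;Z|U)\big],$$ the supremum being over all finite-alphabet random variables $U,V$ and input $X$ forming a Markov chain $U\to V\to X\to (Y,Z)$ (with $Y$, $Z$ generated from $X$ through $p(y|x)$, $p(z|x)$). (i) If $p(y|x)$ is more capable than $p(z|x)$, then for every $\mu\ge 0$, $$\Phi(\mu)=\max_{U\to X\to (Y,Z),\ |\mathcal{U}|\le|\mathcal{X}|}\big[\mu I(X;Y)+I(X;Y|U)-I(X;Z|U)\big],$$ i.e. the choice $V=X$ is optimal for every point of the boundary of the rate-equivocation region, and an optimal $U$ with alphabet size at most $|\mathcal{X}|$ exists. (ii) Conversely, suppose $p(y|x)$ is not more capable than $p(z|x)$ and that $f(P_x)=I(X;Y)-I(X;Z)$ attains its maximum over the simplex of input distributions at some $P_x^*$ with all entries strictly positive. Then $V=X$ is strictly suboptimal: there exists a finite-alphabet $V$ with $V\to X\to(Y,Z)$ such that $$I(V;Y)-I(V;Z)>\max_{P_x}\big[I(X;Y)-I(X;Z)\big].$$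
   Context: For an input distribution $P_x$ on $\mathcal{X}$, $I(X;Y)$ and $I(X;Z)$ denote the mutual informations when $X\sim P_x$ is sent over $p(y|x)$ and $p(z|x)$ respectively. The channel $p(y|x)$ is called more capable than $p(z|x)$ if $I(X;Y)-I(X;Z)\ge 0$ for every input distribution $P_x$. The upper right boundary of the (convex) rate-equivocation region of the wiretap channel is traced by the values $\Phi(\mu)$, $\mu\ge0$ (Csiszár–Körner characterization); in particular $\Phi(0)$ is the secrecy capacity $C_s=\sup_{V\to X\to(Y,Z)}[I(V;Y)-I(V;Z)]$. *)

theory Defs
  imports Complex_Main
begin

(* Finite pmf's are represented as nonnegative real functions on finite sets summing to 1.
   Logarithms are base 2; terms with zero probability contribute 0. *)

definition is_pmf :: "'a set \<Rightarrow> ('a \<Rightarrow> real) \<Rightarrow> bool" where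
  "is_pmf A p \<longleftrightarrow> (\<forall>a\<in>A. 0 \<le> p a) \<and> sum p A = 1"

definition channel :: "('x::finite \<Rightarrow> 'y::finite \<Rightarrow> real) \<Rightarrow> bool" where
  "channel W \<longleftrightarrow> (\<forall>x. is_pmf UNIV (W x))"

definition mi :: "'b set \<Rightarrow> 'c set \<Rightarrow> ('b \<Rightarrow> 'c \<Rightarrow> real) \<Rightarrow> real" where
  "mi B C p = (\<Sum>b\<in>B. \<Sum>c\<in>C.
      if p b c = 0 then 0
      else p b c * log 2 (p b c / ((\<Sum>c'\<in>C. p b c') * (\<Sum>b'\<in>B. p b' c))))"

definition cmi :: "'a set \<Rightarrow> 'b set \<Rightarrow> 'c set \<Rightarrow> ('a \<Rightarrow> 'b \<Rightarrow> 'c \<Rightarrow> real) \<Rightarrow> real" where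
  "cmi A B C r = (\<Sum>a\<in>A. \<Sum>b\<in>B. \<Sum>c\<in>C.
      if r a b c = 0 then 0
      else r a b c * log 2 (r a b c * (\<Sum>b'\<in>B. \<Sum>c'\<in>C. r a b' c') /
             ((\<Sum>c'\<in>C. r a b c') * (\<Sum>b'\<in>B. r a b' c))))"

(* objective  mu I(V;Y) + I(V;Y|U) - I(V;Z|U)  for a joint pmf q(u,v,x) of (U,V,X)
   on A \<times> B \<times> 'x, with Y and Z produced from X through W and Wz *)
definition obj :: "real \<Rightarrow> ('x::finite \<Rightarrow> 'y::finite \<Rightarrow> real) \<Rightarrow> ('x \<Rightarrow> 'z::finite \<Rightarrow> real)
                   \<Rightarrow> 'u set \<Rightarrow> 'v set \<Rightarrow> ('u \<Rightarrow> 'v \<Rightarrow> 'x \<Rightarrow> real) \<Rightarrow> real" where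
  "obj mu W Wz A B q =
     mu * mi B UNIV (\<lambda>v y. \<Sum>u\<in>A. \<Sum>x\<in>UNIV. q u v x * W x y)
     + cmi A B UNIV (\<lambda>u v y. \<Sum>x\<in>UNIV. q u v x * W x y)
     - cmi A B UNIV (\<lambda>u v z. \<Sum>x\<in>UNIV. q u v x * Wz x z)"

(* Phi(mu): supremum over finite-alphabet U \<rightarrow> V \<rightarrow> X, alphabets {..<m}, {..<n};
   the Markov chain is generated as p(u) p(v|u) p(x|v). *)
definition Phi :: "('x::finite \<Rightarrow> 'y::finite \<Rightarrow> real) \<Rightarrow> ('x \<Rightarrow> 'z::finite \<Rightarrow> real) \<Rightarrow> real \<Rightarrow> real" where
  "Phi W Wz mu = Sup {obj mu W Wz {..<m} {..<n} (\<lambda>u v x. pU u * pVU u v * pXV v x) |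
      (m::nat) (n::nat) pU pVU pXV.
      is_pmf {..<m} pU \<and> (\<forall>u<m. is_pmf {..<n} (pVU u)) \<and> (\<forall>v<n. is_pmf UNIV (pXV v))}"

definition VX_values :: "('x::finite \<Rightarrow> 'y::finite \<Rightarrow> real) \<Rightarrow> ('x \<Rightarrow> 'z::finite \<Rightarrow> real) \<Rightarrow> real \<Rightarrow> real set" where
  "VX_values W Wz mu = {obj mu W Wz {..<m} (UNIV::'x set)
        (\<lambda>u v x. pU u * pXU u x * (if v = x then 1 else 0)) |
      (m::nat) pU pXU. m \<le> card (UNIV::'x set) \<and> is_pmf {..<m} pU \<and> (\<forall>u<m. is_pmf UNIV (pXU u))}"

definition IXY :: "('x::finite \<Rightarrow> real) \<Rightarrow> ('x \<Rightarrow> 'y::finite \<Rightarrow> real) \<Rightarrow> real" where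
  "IXY P W = mi UNIV UNIV (\<lambda>x y. P x * W x y)"

definition more_capable :: "('x::finite \<Rightarrow> 'y::finite \<Rightarrow> real) \<Rightarrow> ('x \<Rightarrow> 'z::finite \<Rightarrow> real) \<Rightarrow> bool" where
  "more_capable W Wz \<longleftrightarrow> (\<forall>P. is_pmf UNIV P \<longrightarrow> IXY P W - IXY P Wz \<ge> 0)"

end

theory Submission
  imports Defs "HOL-Analysis.Analysis" "HOL-Real_Asymp.Real_Asymp"
begin

text \<open>Write \<open>f(P) = I(X;Y) - I(X;Z)\<close> for the information gap of an input distribution. If \<open>X\<close>
  given \<open>V = v\<close> has law \<open>P\<^sub>v\<close> and \<open>P\<^sub>u\<close> is the law of \<open>X\<close> given \<open>U = u\<close>, the objective splits as
  \<open>\<mu> (I(X;Y) - I(X;Y|V)) + \<Sum>\<^sub>u p(u) (f(P\<^sub>u) - \<Sum>\<^sub>v p(v|u) f(P\<^sub>v))\<close>.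
  When the main channel is more capable, \<open>f \<ge> 0\<close>, so dropping both subtracted terms bounds the
  objective by its value at \<open>V = X\<close>. A Carath\'eodory-type argument shrinks \<open>U\<close> to at most \<open>|X|\<close>
  values without lowering that value, and the remaining parameters range over a compact set, so the
  supremum is attained with \<open>V = X\<close>.

  Conversely, if \<open>f(Q) < 0\<close> and \<open>f\<close> is maximal at some \<open>P*\<close> of full support, write
  \<open>P* = \<lambda> Q + \<Sum>\<^sub>x (P*(x) - \<lambda> Q(x)) \<delta>\<^sub>x\<close> with \<open>\<lambda> = min P*\<close>; the \<open>V\<close> choosing among these
  components has \<open>I(V;Y) - I(V;Z) = f(P*) - \<lambda> f(Q) > f(P*)\<close>, since point masses have zero gap.\<close>

abbreviation point_mass :: "'a \<Rightarrow> 'a \<Rightarrow> real" where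
  "point_mass v \<equiv> (\<lambda>x. if v = x then 1 else 0)"

definition plogp :: "real \<Rightarrow> real" where
  "plogp t = (if t \<le> 0 then 0 else t * log 2 t)"

text \<open>A formula for \<open>I(X;Y)\<close> that, unlike \<open>IXY\<close>, is continuous in \<open>P\<close> on all of \<open>\<real>\<^sup>X\<close>;
  the two agree on nonnegative \<open>P\<close> (\<open>IXY_eq_plogp\<close>).\<close>
definition IXY_plogp :: "('x::finite \<Rightarrow> 'y::finite \<Rightarrow> real) \<Rightarrow> ('x \<Rightarrow> real) \<Rightarrow> real" where
  "IXY_plogp W P = (\<Sum>x\<in>UNIV. P x * (\<Sum>y\<in>UNIV. plogp (W x y))) - (\<Sum>y\<in>UNIV. plogp (\<Sum>x\<in>UNIV. P x * W x y))"

definition mixture :: "'i set \<Rightarrow> ('i \<Rightarrow> real) \<Rightarrow> ('i \<Rightarrow> 'x \<Rightarrow> real) \<Rightarrow> 'x \<Rightarrow> real" where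
  "mixture I w P = (\<lambda>x. \<Sum>i\<in>I. w i * P i x)"

definition info_gap :: "('x::finite \<Rightarrow> 'y::finite \<Rightarrow> real) \<Rightarrow> ('x \<Rightarrow> 'z::finite \<Rightarrow> real)
    \<Rightarrow> ('x \<Rightarrow> real) \<Rightarrow> real" where
  "info_gap W Wz P = IXY P W - IXY P Wz"

text \<open>The objective for \<open>V = X\<close>, with \<open>U\<close> distributed as \<open>w\<close> on \<open>I\<close> and \<open>X\<close> distributed
  as \<open>P i\<close> given \<open>U = i\<close>.\<close>
definition vx_objective :: "real \<Rightarrow> ('x::finite \<Rightarrow> 'y::finite \<Rightarrow> real) \<Rightarrow> ('x \<Rightarrow> 'z::finite \<Rightarrow> real)
    \<Rightarrow> 'i set \<Rightarrow> ('i \<Rightarrow> real) \<Rightarrow> ('i \<Rightarrow> 'x \<Rightarrow> real) \<Rightarrow> real" where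
  "vx_objective mu W Wz I w P = mu * IXY (mixture I w P) W + (\<Sum>i\<in>I. w i * info_gap W Wz (P i))"

section \<open>Mutual information of mixtures\<close>

lemma mi_eq_plogp:
  fixes w :: "'i \<Rightarrow> real" and r :: "'i \<Rightarrow> 'y::finite \<Rightarrow> real"
  assumes I: "finite I" and w: "\<forall>i\<in>I. w i \<ge> 0" and r: "\<forall>i\<in>I. \<forall>y. r i y \<ge> 0"
    and r_sum: "\<forall>i\<in>I. sum (r i) UNIV = 1"
  shows "mi I UNIV (\<lambda>i y. w i * r i y)
     = (\<Sum>i\<in>I. w i * (\<Sum>y\<in>UNIV. plogp (r i y))) - (\<Sum>y\<in>UNIV. plogp (\<Sum>i\<in>I. w i * r i y))"
proof -
  define out where "out = (\<lambda>y. \<Sum>i\<in>I. w i * r i y)"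
  define L where "L = (\<lambda>y. if out y = 0 then 0 else log 2 (out y))"
  have out_nonneg: "out y \<ge> 0" for y unfolding out_def using w r by (auto intro: sum_nonneg)
  have term_eq: "(if w i * r i y = 0 then 0
       else w i * r i y * log 2 (w i * r i y / ((\<Sum>y'\<in>UNIV. w i * r i y') * (\<Sum>i'\<in>I. w i' * r i' y))))
       = w i * plogp (r i y) - w i * r i y * L y" if i: "i \<in> I" for i y
  proof (cases "w i * r i y = 0")
    case True
    then show ?thesis by (auto simp: plogp_def)
  next
    case False
    then have wi: "w i > 0" and ri: "r i y > 0"
      using w r i by (metis less_eq_real_def mult_zero_left mult_zero_right)+
    have "w i * r i y \<le> out y"
      unfolding out_def using that w r I by (intro member_le_sum) auto
    then have out_pos: "out y > 0" using wi ri by (smt (verit) mult_pos_pos)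
    have marginals: "(\<Sum>y'\<in>UNIV. w i * r i y') * (\<Sum>i'\<in>I. w i' * r i' y) = w i * out y"
      using r_sum i unfolding out_def by (simp add: sum_distrib_left[symmetric])
    have "w i * r i y * log 2 (w i * r i y / (w i * out y)) = w i * plogp (r i y) - w i * r i y * L y"
      using wi ri out_pos by (simp add: plogp_def L_def log_divide algebra_simps)
    then show ?thesis using False marginals by simp
  qed
  have "mi I UNIV (\<lambda>i y. w i * r i y) = (\<Sum>i\<in>I. \<Sum>y\<in>UNIV. w i * plogp (r i y) - w i * r i y * L y)"
    unfolding mi_def using term_eq by (intro sum.cong refl) auto
  also have "\<dots> = (\<Sum>i\<in>I. w i * (\<Sum>y\<in>UNIV. plogp (r i y))) - (\<Sum>y\<in>UNIV. out y * L y)"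
    by (simp add: sum_subtractf sum_distrib_left sum_distrib_right out_def sum.swap[of _ I])
  also have "(\<Sum>y\<in>UNIV. out y * L y) = (\<Sum>y\<in>UNIV. plogp (out y))"
    using out_nonneg by (intro sum.cong refl) (simp add: L_def plogp_def antisym)
  finally show ?thesis by (simp add: out_def)
qed

lemma mi_nonneg:
  assumes B: "finite B" and C: "finite C" and p: "\<forall>b\<in>B. \<forall>c\<in>C. p b c \<ge> 0"
    and p_sum: "(\<Sum>b\<in>B. \<Sum>c\<in>C. p b c) = 1"
  shows "mi B C p \<ge> 0"
proof -
  define pb where "pb = (\<lambda>b. \<Sum>c'\<in>C. p b c')"
  define pc where "pc = (\<lambda>c. \<Sum>b'\<in>B. p b' c)"
  have term_ge: "(if p b c = 0 then 0 else p b c * log 2 (p b c / (pb b * pc c)))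
      \<ge> (p b c - pb b * pc c) / ln 2" if "b \<in> B" "c \<in> C" for b c
  proof (cases "p b c = 0")
    case True
    have "pb b \<ge> 0" "pc c \<ge> 0" unfolding pb_def pc_def using p that by (auto intro: sum_nonneg)
    then show ?thesis using True by (simp add: divide_nonpos_pos)
  next
    case False
    have pos: "p b c > 0" using False p that by force
    have "p b c \<le> pb b" unfolding pb_def using p that C by (intro member_le_sum) auto
    moreover have "p b c \<le> pc c" unfolding pc_def using p that B by (intro member_le_sum) auto
    ultimately have prod_pos: "pb b * pc c > 0" using pos by (smt (verit) mult_pos_pos)
    \<comment> \<open>\<open>ln t \<ge> 1 - 1/t\<close>, the lower half of Gibbs' inequality\<close>
    have "ln (pb b * pc c / p b c) \<le> pb b * pc c / p b c - 1"
      using prod_pos pos by (intro ln_le_minus_one) simp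
    moreover have "ln (p b c / (pb b * pc c)) = - ln (pb b * pc c / p b c)"
      using prod_pos pos by (simp add: ln_div)
    ultimately have "ln (p b c / (pb b * pc c)) \<ge> 1 - pb b * pc c / p b c" by simp
    then have "p b c * ln (p b c / (pb b * pc c)) \<ge> p b c * (1 - pb b * pc c / p b c)"
      using pos by (simp add: mult_left_mono)
    also have "p b c * (1 - pb b * pc c / p b c) = p b c - pb b * pc c"
      using pos by (simp add: field_simps)
    finally show ?thesis using False by (simp add: log_def divide_right_mono)
  qed
  have "mi B C p = (\<Sum>b\<in>B. \<Sum>c\<in>C. if p b c = 0 then 0 else p b c * log 2 (p b c / (pb b * pc c)))"
    unfolding pb_def pc_def mi_def by simp
  also have "\<dots> \<ge> (\<Sum>b\<in>B. \<Sum>c\<in>C. (p b c - pb b * pc c) / ln 2)"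
    using term_ge by (intro sum_mono) auto
  also have "(\<Sum>b\<in>B. \<Sum>c\<in>C. (p b c - pb b * pc c) / ln 2)
     = ((\<Sum>b\<in>B. \<Sum>c\<in>C. p b c) - (\<Sum>b\<in>B. pb b) * (\<Sum>c\<in>C. pc c)) / ln 2"
    by (simp add: sum_divide_distrib[symmetric] sum_subtractf sum_product)
  also have "\<dots> = 0"
    using p_sum by (simp add: pb_def pc_def sum.swap[of _ C])
  finally show ?thesis .
qed

lemma cmi_scaled:
  assumes s_sum: "\<forall>a\<in>A. (\<Sum>b\<in>B. \<Sum>c\<in>C. s a b c) = 1"
  shows "cmi A B C (\<lambda>a b c. al a * s a b c) = (\<Sum>a\<in>A. al a * mi B C (s a))"
  unfolding cmi_def
proof (intro sum.cong refl)
  fix a assume a: "a \<in> A"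
  show "(\<Sum>b\<in>B. \<Sum>c\<in>C. if al a * s a b c = 0 then 0
          else al a * s a b c * log 2 (al a * s a b c * (\<Sum>b'\<in>B. \<Sum>c'\<in>C. al a * s a b' c') /
               ((\<Sum>c'\<in>C. al a * s a b c') * (\<Sum>b'\<in>B. al a * s a b' c))))
      = al a * mi B C (s a)"
  proof (cases "al a = 0")
    case False
    have total: "(\<Sum>b'\<in>B. al a * (\<Sum>c'\<in>C. s a b' c')) = al a"
      using s_sum a by (simp add: sum_distrib_left[symmetric])
    have rows: "(\<Sum>c'\<in>C. al a * s a b c') = al a * (\<Sum>c'\<in>C. s a b c')" for b
      by (simp add: sum_distrib_left)
    have cols: "(\<Sum>b'\<in>B. al a * s a b' c) = al a * (\<Sum>b'\<in>B. s a b' c)" for c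
      by (simp add: sum_distrib_left)
    have ratio: "al a * t * al a / (al a * X * (al a * Y)) = t / (X * Y)" for t X Y
    proof -
      have "al a * t * al a / (al a * X * (al a * Y)) = (al a * al a) * t / ((al a * al a) * (X * Y))"
        by (simp only: mult.assoc mult.commute mult.left_commute)
      then show ?thesis using False by simp
    qed
    have scale: "(if al a * t = 0 then 0 else al a * t * log 2 q)
        = al a * (if t = 0 then 0 else t * log 2 q)" for t q
      using False by simp
    show ?thesis
      unfolding total rows cols ratio scale unfolding mi_def sum_distrib_left by (rule refl)
  qed simp
qed

lemma IXY_eq_plogp:
  assumes P: "\<forall>x. P x \<ge> 0" and W: "channel W"
  shows "IXY P W = IXY_plogp W P"
  unfolding IXY_def IXY_plogp_def using P W by (intro mi_eq_plogp) (auto simp: channel_def is_pmf_def)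

lemma output_sum:
  assumes "is_pmf UNIV P" and "channel W"
  shows "(\<Sum>y\<in>UNIV. \<Sum>x\<in>UNIV. P x * (W x y :: real)) = 1"
proof -
  have "(\<Sum>y\<in>UNIV. \<Sum>x\<in>UNIV. P x * W x y) = (\<Sum>x\<in>UNIV. P x * (\<Sum>y\<in>UNIV. W x y))"
    by (subst sum.swap) (simp add: sum_distrib_left)
  then show ?thesis using assms by (simp add: is_pmf_def channel_def)
qed

lemma IXY_nonneg:
  assumes P: "is_pmf UNIV P" and W: "channel W"
  shows "IXY P W \<ge> 0"
  unfolding IXY_def
proof (rule mi_nonneg)
  show "\<forall>b\<in>UNIV. \<forall>c\<in>UNIV. 0 \<le> P b * W b c" using P W by (auto simp: is_pmf_def channel_def)
  show "(\<Sum>b\<in>UNIV. \<Sum>c\<in>UNIV. P b * W b c) = 1"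
    using output_sum[OF P W] by (subst sum.swap)
qed auto

lemma IXY_point_mass:
  assumes W: "channel W"
  shows "IXY (point_mass v) W = 0"
  using IXY_eq_plogp[OF _ W, of "point_mass v"]
  by (simp add: IXY_plogp_def if_distrib[of "\<lambda>t. t * _"] cong: if_cong)

lemma info_gap_point_mass:
  assumes "channel W" and "channel Wz"
  shows "info_gap W Wz (point_mass v) = 0"
  using IXY_point_mass[OF assms(1)] IXY_point_mass[OF assms(2)] by (simp add: info_gap_def)

lemma point_mass_is_pmf: "is_pmf UNIV (point_mass (v::'x::finite))"
  by (simp add: is_pmf_def)

lemma mixture_is_pmf:
  assumes "finite I" and w: "is_pmf I w" and P: "\<forall>i\<in>I. is_pmf UNIV (P i)"
  shows "is_pmf UNIV (mixture I w P :: 'x::finite \<Rightarrow> real)"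
proof -
  have "(\<Sum>x\<in>UNIV. \<Sum>i\<in>I. w i * P i x) = (\<Sum>i\<in>I. w i * (\<Sum>x\<in>UNIV. P i x))"
    by (subst sum.swap) (simp add: sum_distrib_left)
  also have "\<dots> = 1" using w P by (simp add: is_pmf_def)
  finally show ?thesis using w P unfolding mixture_def is_pmf_def by (auto intro!: sum_nonneg)
qed

lemma sum_mixture:
  assumes "\<forall>i\<in>I. sum (P i) UNIV = 1"
  shows "sum (mixture I w P) (UNIV :: 'x::finite set) = sum w I"
proof -
  have "sum (mixture I w P) UNIV = (\<Sum>i\<in>I. w i * (\<Sum>x\<in>UNIV. P i x))"
    unfolding mixture_def by (subst sum.swap) (simp add: sum_distrib_left)
  then show ?thesis using assms by simp
qed

lemma mixture_assoc:
  "mixture B (\<lambda>v. \<Sum>u\<in>A. pU u * pVU u v) pXV = mixture A pU (\<lambda>u. mixture B (pVU u) pXV)"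
  unfolding mixture_def sum_distrib_right sum_distrib_left
  by (intro ext, subst sum.swap) (simp add: mult.assoc)

lemma mixture_reindex:
  assumes "bij_betw g B A"
  shows "mixture B (\<lambda>k. w (g k)) (\<lambda>k. P (g k)) = mixture A w P"
proof
  fix x
  show "mixture B (\<lambda>k. w (g k)) (\<lambda>k. P (g k)) x = mixture A w P x"
    unfolding mixture_def using sum.reindex_bij_betw[OF assms, of "\<lambda>i. w i * P i x"] by simp
qed

lemma mixture_point_masses:
  assumes g: "bij_betw g B (UNIV :: 'x::finite set)"
  shows "mixture B (\<lambda>k. F (g k)) (\<lambda>k. point_mass (g k)) = (F :: 'x \<Rightarrow> real)"
proof -
  have "mixture UNIV F point_mass = F"
    unfolding mixture_def by (simp add: if_distrib[of "\<lambda>t. _ * t"] cong: if_cong)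
  then show ?thesis using mixture_reindex[OF g, of F point_mass] by simp
qed

lemma mi_mixture:
  fixes P :: "'i \<Rightarrow> 'x::finite \<Rightarrow> real" and W :: "'x \<Rightarrow> 'y::finite \<Rightarrow> real"
  assumes I: "finite I" and w: "\<forall>i\<in>I. w i \<ge> 0" and P: "\<forall>i\<in>I. is_pmf UNIV (P i)" and W: "channel W"
  shows "mi I UNIV (\<lambda>i y. w i * (\<Sum>x\<in>UNIV. P i x * W x y))
     = IXY (mixture I w P) W - (\<Sum>i\<in>I. w i * IXY (P i) W)"
proof -
  define c where "c = (\<lambda>x. \<Sum>y\<in>UNIV. plogp (W x y))"
  define out where "out = (\<lambda>Q y. \<Sum>x\<in>UNIV. Q x * W x y)"
  have P_nonneg: "\<forall>x. P i x \<ge> 0" if "i \<in> I" for i using P that by (simp add: is_pmf_def)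
  have mix_nonneg: "\<forall>x. mixture I w P x \<ge> 0"
    unfolding mixture_def using w P_nonneg by (auto intro!: sum_nonneg)
  have IXY_P: "IXY Q W = (\<Sum>x\<in>UNIV. Q x * c x) - (\<Sum>y\<in>UNIV. plogp (out Q y))"
    if "\<forall>x. Q x \<ge> 0" for Q
    unfolding c_def out_def IXY_eq_plogp[OF that W] IXY_plogp_def ..
  have mi_eq: "mi I UNIV (\<lambda>i y. w i * (\<Sum>x\<in>UNIV. P i x * W x y))
     = (\<Sum>i\<in>I. w i * (\<Sum>y\<in>UNIV. plogp (out (P i) y))) - (\<Sum>y\<in>UNIV. plogp (\<Sum>i\<in>I. w i * out (P i) y))"
    unfolding out_def
  proof (rule mi_eq_plogp[OF I w])
    show "\<forall>i\<in>I. \<forall>y. 0 \<le> (\<Sum>x\<in>UNIV. P i x * W x y)"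
      using P_nonneg W by (auto simp: channel_def is_pmf_def intro!: sum_nonneg)
    show "\<forall>i\<in>I. (\<Sum>y\<in>UNIV. \<Sum>x\<in>UNIV. P i x * W x y) = 1"
      using output_sum P W by blast
  qed
  have mix_out: "out (mixture I w P) y = (\<Sum>i\<in>I. w i * out (P i) y)" for y
    unfolding out_def mixture_def sum_distrib_right sum_distrib_left
    by (subst sum.swap) (simp add: mult.assoc)
  have mix_c: "(\<Sum>x\<in>UNIV. mixture I w P x * c x) = (\<Sum>i\<in>I. w i * (\<Sum>x\<in>UNIV. P i x * c x))"
    unfolding mixture_def sum_distrib_right sum_distrib_left by (subst sum.swap) (simp add: mult.assoc)
  have "IXY (mixture I w P) W - (\<Sum>i\<in>I. w i * IXY (P i) W)
      = (\<Sum>i\<in>I. w i * (\<Sum>y\<in>UNIV. plogp (out (P i) y))) - (\<Sum>y\<in>UNIV. plogp (\<Sum>i\<in>I. w i * out (P i) y))"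
    using IXY_P[OF mix_nonneg] IXY_P[OF P_nonneg]
    by (simp add: mix_out mix_c right_diff_distrib sum_subtractf)
  with mi_eq show ?thesis by simp
qed

section \<open>Decomposition of the objective\<close>

lemma obj_decomposition:
  fixes W :: "'x::finite \<Rightarrow> 'y::finite \<Rightarrow> real" and Wz :: "'x \<Rightarrow> 'z::finite \<Rightarrow> real"
    and pU :: "'u \<Rightarrow> real" and pVU :: "'u \<Rightarrow> 'v \<Rightarrow> real" and pXV :: "'v \<Rightarrow> 'x \<Rightarrow> real"
  assumes A: "finite A" and B: "finite B" and pU: "\<forall>u\<in>A. pU u \<ge> 0"
    and pVU: "\<forall>u\<in>A. is_pmf B (pVU u)" and pXV: "\<forall>v\<in>B. is_pmf UNIV (pXV v)"
    and W: "channel W" and Wz: "channel Wz"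
  defines "pV \<equiv> \<lambda>v. \<Sum>u\<in>A. pU u * pVU u v"
  shows "obj mu W Wz A B (\<lambda>u v x. pU u * pVU u v * pXV v x)
     = mu * (IXY (mixture B pV pXV) W - (\<Sum>v\<in>B. pV v * IXY (pXV v) W))
       + (\<Sum>u\<in>A. pU u * (info_gap W Wz (mixture B (pVU u) pXV)
                             - (\<Sum>v\<in>B. pVU u v * info_gap W Wz (pXV v))))"
proof -
  have pV: "\<forall>v\<in>B. pV v \<ge> 0" unfolding pV_def using pU pVU by (auto simp: is_pmf_def intro!: sum_nonneg)
  have pVU_nonneg: "\<forall>v\<in>B. pVU u v \<ge> 0" if "u \<in> A" for u using pVU that by (simp add: is_pmf_def)
  have marginal: "(\<lambda>v y. \<Sum>u\<in>A. \<Sum>x\<in>UNIV. pU u * pVU u v * pXV v x * V x y)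
      = (\<lambda>v y. pV v * (\<Sum>x\<in>UNIV. pXV v x * V x y))" for V :: "'x \<Rightarrow> 'w::finite \<Rightarrow> real"
    unfolding pV_def by (intro ext) (simp add: sum_product mult.assoc)
  have conditional: "(\<lambda>u v y. \<Sum>x\<in>UNIV. pU u * pVU u v * pXV v x * V x y)
      = (\<lambda>u v y. pU u * (pVU u v * (\<Sum>x\<in>UNIV. pXV v x * V x y)))" for V :: "'x \<Rightarrow> 'w::finite \<Rightarrow> real"
    by (intro ext) (simp add: sum_distrib_left mult.assoc)
  have cmi_eq: "cmi A B UNIV (\<lambda>u v y. pU u * (pVU u v * (\<Sum>x\<in>UNIV. pXV v x * V x y)))
      = (\<Sum>u\<in>A. pU u * (IXY (mixture B (pVU u) pXV) V - (\<Sum>v\<in>B. pVU u v * IXY (pXV v) V)))"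
    if V: "channel V" for V :: "'x \<Rightarrow> 'w::finite \<Rightarrow> real"
  proof (subst cmi_scaled)
    show "\<forall>u\<in>A. (\<Sum>v\<in>B. \<Sum>y\<in>UNIV. pVU u v * (\<Sum>x\<in>UNIV. pXV v x * V x y)) = 1"
      using output_sum[OF _ V] pXV pVU by (simp add: sum_distrib_left[symmetric] is_pmf_def)
  qed (use mi_mixture[OF B pVU_nonneg pXV V] in simp)
  show ?thesis
    unfolding obj_def marginal conditional cmi_eq[OF W] cmi_eq[OF Wz] mi_mixture[OF B pV pXV W]
    by (simp add: info_gap_def sum_subtractf right_diff_distrib sum.distrib[symmetric] algebra_simps)
qed

lemma obj_le_vx_objective:
  fixes W :: "'x::finite \<Rightarrow> 'y::finite \<Rightarrow> real" and Wz :: "'x \<Rightarrow> 'z::finite \<Rightarrow> real"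
  assumes A: "finite A" and B: "finite B" and pU: "is_pmf A pU"
    and pVU: "\<forall>u\<in>A. is_pmf B (pVU u)" and pXV: "\<forall>v\<in>B. is_pmf UNIV (pXV v)"
    and W: "channel W" and Wz: "channel Wz" and mc: "more_capable W Wz" and mu: "mu \<ge> 0"
  shows "obj mu W Wz A B (\<lambda>u v x. pU u * pVU u v * pXV v x)
         \<le> vx_objective mu W Wz A pU (\<lambda>u. mixture B (pVU u) pXV)"
proof -
  have pU_nonneg: "\<forall>u\<in>A. pU u \<ge> 0" using pU by (simp add: is_pmf_def)
  have IXY_avg: "(\<Sum>v\<in>B. (\<Sum>u\<in>A. pU u * pVU u v) * IXY (pXV v) W) \<ge> 0"
    using pU_nonneg pVU pXV IXY_nonneg[OF _ W]
    by (auto simp: is_pmf_def intro!: sum_nonneg mult_nonneg_nonneg)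
  have gap_nonneg: "info_gap W Wz Q \<ge> 0" if "is_pmf UNIV Q" for Q
    using mc that by (simp add: more_capable_def info_gap_def)
  have gap_avg: "pU u * (info_gap W Wz (mixture B (pVU u) pXV) - (\<Sum>v\<in>B. pVU u v * info_gap W Wz (pXV v)))
      \<le> pU u * info_gap W Wz (mixture B (pVU u) pXV)" if u: "u \<in> A" for u
  proof -
    have "pVU u v * info_gap W Wz (pXV v) \<ge> 0" if "v \<in> B" for v
      using pVU u pXV gap_nonneg[of "pXV v"] that unfolding is_pmf_def by (intro mult_nonneg_nonneg) auto
    then have "(\<Sum>v\<in>B. pVU u v * info_gap W Wz (pXV v)) \<ge> 0" by (rule sum_nonneg)
    then show ?thesis using pU_nonneg u by (intro mult_left_mono) auto
  qed
  have "mu * (IXY (mixture B (\<lambda>v. \<Sum>u\<in>A. pU u * pVU u v) pXV) W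
               - (\<Sum>v\<in>B. (\<Sum>u\<in>A. pU u * pVU u v) * IXY (pXV v) W))
      \<le> mu * IXY (mixture B (\<lambda>v. \<Sum>u\<in>A. pU u * pVU u v) pXV) W"
    using IXY_avg mu by (intro mult_left_mono) auto
  then have "obj mu W Wz A B (\<lambda>u v x. pU u * pVU u v * pXV v x)
     \<le> mu * IXY (mixture B (\<lambda>v. \<Sum>u\<in>A. pU u * pVU u v) pXV) W
       + (\<Sum>u\<in>A. pU u * info_gap W Wz (mixture B (pVU u) pXV))"
    unfolding obj_decomposition[OF A B pU_nonneg pVU pXV W Wz]
    using gap_avg by (intro add_mono sum_mono)
  then show ?thesis unfolding vx_objective_def mixture_assoc .
qed

lemma obj_relabelled_V_eq_X:
  fixes W :: "'x::finite \<Rightarrow> 'y::finite \<Rightarrow> real" and Wz :: "'x \<Rightarrow> 'z::finite \<Rightarrow> real"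
  assumes A: "finite A" and pU: "is_pmf A pU" and pXU: "\<forall>u\<in>A. is_pmf UNIV (pXU u)"
    and W: "channel W" and Wz: "channel Wz" and B: "finite B" and g: "bij_betw g B (UNIV::'x set)"
  shows "obj mu W Wz A B (\<lambda>u v x. pU u * pXU u (g v) * point_mass (g v) x)
      = vx_objective mu W Wz A pU pXU"
proof -
  have pU_nonneg: "\<forall>u\<in>A. pU u \<ge> 0" using pU by (simp add: is_pmf_def)
  have pVU: "\<forall>u\<in>A. is_pmf B (\<lambda>v. pXU u (g v))"
  proof
    fix u assume "u \<in> A"
    then show "is_pmf B (\<lambda>v. pXU u (g v))"
      using pXU sum.reindex_bij_betw[OF g, of "pXU u"] by (simp add: is_pmf_def)
  qed
  have pXV: "\<forall>v\<in>B. is_pmf UNIV (point_mass (g v))" by (simp add: point_mass_is_pmf)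
  have mix_V: "mixture B (\<lambda>v. \<Sum>u\<in>A. pU u * pXU u (g v)) (\<lambda>v. point_mass (g v)) = mixture A pU pXU"
    using mixture_point_masses[OF g, of "mixture A pU pXU"] by (simp add: mixture_def[of A])
  have mix_U: "mixture B (\<lambda>v. pXU u (g v)) (\<lambda>v. point_mass (g v)) = pXU u" for u
    using mixture_point_masses[OF g] .
  show ?thesis
    unfolding obj_decomposition[OF A B pU_nonneg pVU pXV W Wz] mix_V mix_U
      IXY_point_mass[OF W] info_gap_point_mass[OF W Wz]
    by (simp add: vx_objective_def)
qed

lemma obj_V_eq_X:
  fixes W :: "'x::finite \<Rightarrow> 'y::finite \<Rightarrow> real" and Wz :: "'x \<Rightarrow> 'z::finite \<Rightarrow> real"
  assumes "finite A" and "is_pmf A pU" and "\<forall>u\<in>A. is_pmf UNIV (pXU u)"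
    and "channel W" and "channel Wz"
  shows "obj mu W Wz A (UNIV::'x set) (\<lambda>u v x. pU u * pXU u x * point_mass v x)
      = vx_objective mu W Wz A pU pXU"
proof -
  have "(\<lambda>u v x. pU u * pXU u (id v) * point_mass (id v) x) = (\<lambda>u v x. pU u * pXU u x * point_mass v x)"
    by (simp add: fun_eq_iff)
  with obj_relabelled_V_eq_X[OF assms finite bij_betw_id] show ?thesis by simp
qed

section \<open>Auxiliary variables better than the input\<close>

lemma mi_difference_mixture:
  fixes P :: "'i \<Rightarrow> 'x::finite \<Rightarrow> real"
    and W :: "'x \<Rightarrow> 'y::finite \<Rightarrow> real" and Wz :: "'x \<Rightarrow> 'z::finite \<Rightarrow> real"
  assumes I: "finite I" and w: "\<forall>i\<in>I. w i \<ge> 0" and P: "\<forall>i\<in>I. is_pmf UNIV (P i)"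
    and W: "channel W" and Wz: "channel Wz"
  shows "mi I UNIV (\<lambda>i y. \<Sum>x\<in>UNIV. w i * P i x * W x y)
         - mi I UNIV (\<lambda>i z. \<Sum>x\<in>UNIV. w i * P i x * Wz x z)
       = info_gap W Wz (mixture I w P) - (\<Sum>i\<in>I. w i * info_gap W Wz (P i))"
proof -
  have factor: "(\<lambda>i y. \<Sum>x\<in>UNIV. w i * P i x * V x y) = (\<lambda>i y. w i * (\<Sum>x\<in>UNIV. P i x * V x y))"
    for V :: "'x \<Rightarrow> 'w::finite \<Rightarrow> real"
    by (simp add: sum_distrib_left mult.assoc)
  show ?thesis
    unfolding factor mi_mixture[OF I w P W] mi_mixture[OF I w P Wz]
    by (simp add: info_gap_def right_diff_distrib sum_subtractf)
qed

lemma sum_lessThan_Suc_if: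
  "(\<Sum>k<Suc N. if k = N then a else f k) = a + (\<Sum>k<N. f k)"
  by (simp add: lessThan_Suc)

lemma V_exceeds_info_gap_of_full_support:
  fixes W :: "'x::finite \<Rightarrow> 'y::finite \<Rightarrow> real" and Wz :: "'x \<Rightarrow> 'z::finite \<Rightarrow> real"
  assumes W: "channel W" and Wz: "channel Wz"
    and Q: "is_pmf UNIV Q" and Q_gap: "info_gap W Wz Q < 0"
    and Ps: "is_pmf UNIV Ps" and Ps_pos: "\<forall>x. Ps x > 0"
  shows "\<exists>(n::nat) pV pXV. is_pmf {..<n} pV \<and> (\<forall>v<n. is_pmf UNIV (pXV v)) \<and>
           mi {..<n} UNIV (\<lambda>v y. \<Sum>x\<in>UNIV. pV v * pXV v x * W x y)
           - mi {..<n} UNIV (\<lambda>v z. \<Sum>x\<in>UNIV. pV v * pXV v x * Wz x z) > info_gap W Wz Ps"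
proof -
  define N where "N = CARD('x)"
  obtain g where g: "bij_betw g {..<N} (UNIV :: 'x set)"
    using ex_bij_betw_nat_finite[of "UNIV :: 'x set"] unfolding N_def lessThan_atLeast0 by auto
  define lam where "lam = Min (range Ps)"
  have lam_pos: "lam > 0" and lam_le: "\<And>x. lam \<le> Ps x" unfolding lam_def using Ps_pos by simp_all
  define F where "F = (\<lambda>x. Ps x - lam * Q x)"
  have F_nonneg: "F x \<ge> 0" for x
  proof -
    have "Q x \<le> sum Q UNIV" using Q by (intro member_le_sum) (auto simp: is_pmf_def)
    then have "lam * Q x \<le> lam" using Q lam_pos by (simp add: is_pmf_def mult_left_le)
    then show ?thesis using lam_le[of x] by (simp add: F_def)
  qed
  define pV where "pV = (\<lambda>k. if k = N then lam else F (g k))"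
  define pXV where "pXV = (\<lambda>k. if k = N then Q else point_mass (g k))"
  have "(\<Sum>k<N. F (g k)) = sum F UNIV" using sum.reindex_bij_betw[OF g] .
  also have "\<dots> = 1 - lam" using Ps Q by (simp add: F_def sum_subtractf is_pmf_def flip: sum_distrib_left)
  finally have pV_pmf: "is_pmf {..<Suc N} pV"
    unfolding is_pmf_def pV_def sum_lessThan_Suc_if using lam_pos F_nonneg by auto
  have pXV_pmf: "\<forall>v\<in>{..<Suc N}. is_pmf UNIV (pXV v)"
    unfolding pXV_def using Q by (simp add: point_mass_is_pmf)
  have "mixture {..<Suc N} pV pXV x = lam * Q x + mixture {..<N} (\<lambda>k. F (g k)) (\<lambda>k. point_mass (g k)) x" for x
    unfolding mixture_def pV_def pXV_def by (simp add: lessThan_Suc)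
  then have mix: "mixture {..<Suc N} pV pXV = Ps"
    unfolding mixture_point_masses[OF g] by (simp add: F_def fun_eq_iff)
  have avg: "(\<Sum>v<Suc N. pV v * info_gap W Wz (pXV v)) = lam * info_gap W Wz Q"
    unfolding pV_def pXV_def by (simp add: lessThan_Suc info_gap_point_mass[OF W Wz])
  have "mi {..<Suc N} UNIV (\<lambda>v y. \<Sum>x\<in>UNIV. pV v * pXV v x * W x y)
        - mi {..<Suc N} UNIV (\<lambda>v z. \<Sum>x\<in>UNIV. pV v * pXV v x * Wz x z)
      = info_gap W Wz Ps - lam * info_gap W Wz Q"
    using mi_difference_mixture[OF finite_lessThan _ pXV_pmf W Wz] pV_pmf mix avg
    by (simp add: is_pmf_def)
  also have "\<dots> > info_gap W Wz Ps" using lam_pos Q_gap by (simp add: mult_pos_neg)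
  finally show ?thesis using pV_pmf pXV_pmf by (intro exI[of _ "Suc N"] exI[of _ pV] exI[of _ pXV]) simp
qed

section \<open>Support reduction\<close>

lemma exists_nontrivial_linear_relation:
  fixes P :: "'i \<Rightarrow> 'x::finite \<Rightarrow> real"
  assumes I: "finite I" and card: "card I > CARD('x)"
  shows "\<exists>c. (\<exists>i\<in>I. c i \<noteq> 0) \<and> (\<forall>x. (\<Sum>i\<in>I. c i * P i x) = 0)"
proof (cases "inj_on (\<lambda>i. (\<chi> x. P i x) :: real^'x) I")
  case False
  then obtain i k where ik: "i \<in> I" "k \<in> I" "i \<noteq> k" and "((\<chi> x. P i x) :: real^'x) = (\<chi> x. P k x)"
    unfolding inj_on_def by blast
  then have "P i = P k" by (simp add: vec_lambda_inject fun_eq_iff)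
  define c where "c = (\<lambda>j. (if j = i then 1 else 0) - (if j = k then 1 else (0::real)))"
  have "(\<Sum>j\<in>I. c j * P j x) = 0" for x
    unfolding c_def left_diff_distrib sum_subtractf using ik I \<open>P i = P k\<close>
    by (simp add: if_distrib[of "\<lambda>t. t * _"] cong: if_cong)
  moreover have "c i \<noteq> 0" using ik by (simp add: c_def)
  ultimately show ?thesis using ik by blast
next
  case True
  define V where "V = (\<lambda>i. (\<chi> x. P i x) :: real^'x)"
  have inj: "inj_on V I" using True by (simp add: V_def)
  have "card (V ` I) > DIM(real^'x)" using card card_image[OF inj] by simp
  then have "dependent (V ` I)" using dependent_biggerset by blast
  then obtain u where u: "\<exists>v\<in>V ` I. u v \<noteq> 0" and "(\<Sum>v\<in>V ` I. u v *\<^sub>R v) = 0"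
    using dependent_finite[of "V ` I"] I by auto
  then have "(\<Sum>i\<in>I. u (V i) *\<^sub>R V i) $ x = 0" for x
    using sum.reindex[OF inj, of "\<lambda>v. u v *\<^sub>R v"] by (simp add: o_def)
  then have "(\<Sum>i\<in>I. u (V i) * P i x) = 0" for x by (simp add: V_def)
  moreover have "\<exists>i\<in>I. u (V i) \<noteq> 0" using u by auto
  ultimately show ?thesis by (intro exI[of _ "\<lambda>i. u (V i)"]) blast
qed

lemma nonneg_ray_exit:
  fixes w d :: "'i \<Rightarrow> real"
  assumes I: "finite I" and w: "\<forall>i\<in>I. w i \<ge> 0" and j0: "j0 \<in> I" "d j0 < 0"
  shows "\<exists>t\<ge>0. \<exists>j\<in>I. (\<forall>i\<in>I. w i + t * d i \<ge> 0) \<and> w j + t * d j = 0"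
proof -
  define N where "N = {i\<in>I. d i < 0}"
  have N: "finite N" "N \<noteq> {}" using I j0 by (auto simp: N_def)
  define t where "t = Min ((\<lambda>i. w i / (- d i)) ` N)"
  have "t \<in> (\<lambda>i. w i / (- d i)) ` N" unfolding t_def using N by (intro Min_in) auto
  then obtain j where j: "j \<in> N" "t = w j / (- d j)" by blast
  have t_le: "t \<le> w i / (- d i)" if "i \<in> N" for i
    unfolding t_def using N that by (intro Min_le) auto
  have t: "t \<ge> 0" using j w by (auto simp: N_def divide_nonneg_neg)
  have "w i + t * d i \<ge> 0" if i: "i \<in> I" for i
  proof (cases "d i < 0")
    case True
    then have "t * (- d i) \<le> w i / (- d i) * (- d i)"
      using t_le i by (intro mult_right_mono) (auto simp: N_def)
    then show ?thesis using True by simp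
  next
    case False
    then show ?thesis using w i t by simp
  qed
  moreover have "j \<in> I" "w j + t * d j = 0" using j by (auto simp: N_def)
  ultimately show ?thesis using t by blast
qed

text \<open>Carath\'eodory-type step: more than \<open>|X|\<close> distributions satisfy a linear relation, and moving
  the weights along it (in the direction not decreasing \<open>\<Sum> w F\<close>) until one of them vanishes
  keeps the mixture fixed.\<close>
lemma mixture_support_reduction_step:
  fixes P :: "'i \<Rightarrow> 'x::finite \<Rightarrow> real" and F :: "'i \<Rightarrow> real"
  assumes I: "finite I" and card: "card I > CARD('x)" and w: "\<forall>i\<in>I. w i \<ge> 0"
    and P: "\<forall>i\<in>I. sum (P i) UNIV = 1"
  shows "\<exists>j\<in>I. \<exists>w'. (\<forall>i\<in>I. w' i \<ge> 0) \<and> w' j = 0 \<and> mixture I w' P = mixture I w P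
                    \<and> (\<Sum>i\<in>I. w i * F i) \<le> (\<Sum>i\<in>I. w' i * F i)"
proof -
  obtain c where c_nz: "\<exists>i\<in>I. c i \<noteq> 0" and c_rel: "\<forall>x. (\<Sum>i\<in>I. c i * P i x) = 0"
    using exists_nontrivial_linear_relation[OF I card] by blast
  have c_sum: "(\<Sum>i\<in>I. c i) = 0"
  proof -
    have "(\<Sum>i\<in>I. c i) = (\<Sum>i\<in>I. c i * (\<Sum>x\<in>UNIV. P i x))" using P by simp
    also have "\<dots> = (\<Sum>x\<in>UNIV. \<Sum>i\<in>I. c i * P i x)"
      by (simp add: sum_distrib_left) (rule sum.swap)
    finally show ?thesis using c_rel by simp
  qed
  obtain d where d_rel: "\<forall>x. (\<Sum>i\<in>I. d i * P i x) = 0" and d_sum: "(\<Sum>i\<in>I. d i) = 0"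
    and d_F: "(\<Sum>i\<in>I. d i * F i) \<ge> 0" and d_nz: "\<exists>i\<in>I. d i \<noteq> 0"
  proof (cases "(\<Sum>i\<in>I. c i * F i) \<ge> 0")
    case True
    show ?thesis by (rule that[of c]) (use c_rel c_sum c_nz True in auto)
  next
    case False
    show ?thesis by (rule that[of "\<lambda>i. - c i"]) (use c_rel c_sum c_nz False in \<open>auto simp: sum_negf\<close>)
  qed
  have "\<exists>j0\<in>I. d j0 < 0"
  proof (rule ccontr)
    assume "\<not> (\<exists>j0\<in>I. d j0 < 0)"
    then have "\<forall>i\<in>I. d i \<ge> 0" by (simp add: not_less)
    with sum_nonneg_eq_0_iff[OF I] d_sum have "\<forall>i\<in>I. d i = 0" by blast
    then show False using d_nz by blast
  qed
  then obtain t j where t: "t \<ge> 0" and j: "j \<in> I"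
    and nonneg: "\<forall>i\<in>I. w i + t * d i \<ge> 0" and zero: "w j + t * d j = 0"
    using nonneg_ray_exit[OF I w] by blast
  have "mixture I (\<lambda>i. w i + t * d i) P = mixture I w P"
    unfolding mixture_def using d_rel
    by (simp add: distrib_right sum.distrib mult.assoc sum_distrib_left[symmetric])
  moreover have "(\<Sum>i\<in>I. w i * F i) \<le> (\<Sum>i\<in>I. (w i + t * d i) * F i)"
    using t d_F by (simp add: distrib_right sum.distrib mult.assoc sum_distrib_left[symmetric])
  ultimately show ?thesis
    using nonneg zero by (intro bexI[OF _ j] exI[of _ "\<lambda>i. w i + t * d i"]) simp
qed

lemma mixture_support_reduction:
  fixes P :: "'i \<Rightarrow> 'x::finite \<Rightarrow> real" and F :: "'i \<Rightarrow> real"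
  assumes "finite I" and "\<forall>i\<in>I. w i \<ge> 0" and "\<forall>i\<in>I. sum (P i) UNIV = 1"
  shows "\<exists>J w'. J \<subseteq> I \<and> card J \<le> CARD('x) \<and> (\<forall>i\<in>J. w' i \<ge> 0) \<and> mixture J w' P = mixture I w P
           \<and> (\<Sum>i\<in>I. w i * F i) \<le> (\<Sum>i\<in>J. w' i * F i)"
  using assms
proof (induction "card I" arbitrary: I w rule: less_induct)
  case less
  note I = less.prems(1) and w = less.prems(2) and P = less.prems(3)
  show ?case
  proof (cases "card I \<le> CARD('x)")
    case True
    then show ?thesis using w by blast
  next
    case False
    then obtain j w' where j: "j \<in> I" and w': "\<forall>i\<in>I. w' i \<ge> 0" "w' j = 0"
      and mix: "mixture I w' P = mixture I w P" and F: "(\<Sum>i\<in>I. w i * F i) \<le> (\<Sum>i\<in>I. w' i * F i)"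
      using mixture_support_reduction_step[OF I _ w P] by (meson not_le)
    have drop_j: "mixture (I - {j}) w' P = mixture I w' P"
      "(\<Sum>i\<in>I - {j}. w' i * F i) = (\<Sum>i\<in>I. w' i * F i)"
      unfolding mixture_def by (simp_all add: sum.remove[OF I j] w'(2))
    have "finite (I - {j})" "\<forall>i\<in>I - {j}. w' i \<ge> 0" "\<forall>i\<in>I - {j}. sum (P i) UNIV = 1"
      using I w'(1) P by auto
    from less.hyps[OF card_Diff1_less[OF I j] this]
    obtain J w'' where J: "J \<subseteq> I - {j}" "card J \<le> CARD('x)" "\<forall>i\<in>J. w'' i \<ge> 0"
      "mixture J w'' P = mixture (I - {j}) w' P" "(\<Sum>i\<in>I - {j}. w' i * F i) \<le> (\<Sum>i\<in>J. w'' i * F i)"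
      by blast
    have "J \<subseteq> I" "mixture J w'' P = mixture I w P" "(\<Sum>i\<in>I. w i * F i) \<le> (\<Sum>i\<in>J. w'' i * F i)"
      using J(1,4,5) drop_j mix F by auto
    then show ?thesis using J(2,3) by blast
  qed
qed

section \<open>Compactness of the parameters for V = X\<close>

lemma isCont_plogp: "isCont plogp t"
proof -
  consider "t < 0" | "t > 0" | "t = 0" by linarith
  then show ?thesis
  proof cases
    case 1
    then have ev: "eventually (\<lambda>s. plogp s = 0) (nhds t)"
      using eventually_nhds_in_open[of "{..<0}" t] by (auto elim!: eventually_mono simp: plogp_def)
    show ?thesis unfolding isCont_cong[OF ev] by simp
  next
    case 2
    then have ev: "eventually (\<lambda>s. plogp s = s * log 2 s) (nhds t)"
      using eventually_nhds_in_open[of "{0<..}" t] by (auto elim!: eventually_mono simp: plogp_def)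
    show ?thesis unfolding isCont_cong[OF ev] using 2 by (auto intro!: continuous_intros)
  next
    case 3
    have "eventually (\<lambda>s. s \<in> {-1<..<0}) (at_left (0::real))" by (rule eventually_at_left_real) simp
    then have "eventually (\<lambda>s. plogp s = 0) (at_left 0)" by eventually_elim (simp add: plogp_def)
    then have "(plogp \<longlongrightarrow> 0) (at_left 0)" by (rule tendsto_eventually)
    moreover have "((\<lambda>s. s * log 2 s) \<longlongrightarrow> 0) (at_right 0)" by real_asymp
    then have "(plogp \<longlongrightarrow> 0) (at_right 0)"
      by (rule Lim_transform_eventually)
        (use eventually_at_right_less[of "0::real"] in \<open>auto elim!: eventually_mono simp: plogp_def\<close>)
    ultimately have "(plogp \<longlongrightarrow> 0) (at 0)" by (rule filterlim_split_at)
    then show ?thesis using 3 by (simp add: isCont_def plogp_def)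
  qed
qed

lemma continuous_on_plogp [continuous_intros]:
  "continuous_on S f \<Longrightarrow> continuous_on S (\<lambda>x. plogp (f x))"
  by (rule continuous_on_compose2[of UNIV plogp])
    (auto intro: continuous_at_imp_continuous_on isCont_plogp)

definition pmf_vectors :: "(real^'k::finite) set" where
  "pmf_vectors = {a. (\<forall>k. a $ k \<ge> 0) \<and> (\<Sum>k\<in>UNIV. a $ k) = 1}"

definition stochastic_matrices :: "(real^('k::finite \<times> 'l::finite)) set" where
  "stochastic_matrices = {b. (\<forall>k. b $ k \<ge> 0) \<and> (\<forall>u. (\<Sum>x\<in>UNIV. b $ (u, x)) = 1)}"

lemma compact_pmf_vectors: "compact (pmf_vectors :: (real^'k::finite) set)"
proof -
  have "closed (pmf_vectors :: (real^'k) set)" unfolding pmf_vectors_def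
    by (intro closed_Collect_conj closed_Collect_all closed_Collect_le closed_Collect_eq continuous_intros)
  moreover have "pmf_vectors \<subseteq> cbox 0 (1 :: real^'k)"
  proof
    fix a :: "real^'k" assume a: "a \<in> pmf_vectors"
    have "a $ k \<le> (\<Sum>k\<in>UNIV. a $ k)" for k using a by (intro member_le_sum) (auto simp: pmf_vectors_def)
    then show "a \<in> cbox 0 1" using a by (simp add: mem_box_cart pmf_vectors_def)
  qed
  ultimately show ?thesis using bounded_subset bounded_cbox compact_eq_bounded_closed by blast
qed

lemma compact_stochastic_matrices:
  "compact (stochastic_matrices :: (real^('k::finite \<times> 'l::finite)) set)"
proof -
  have "closed (stochastic_matrices :: (real^('k \<times> 'l)) set)" unfolding stochastic_matrices_def
    by (intro closed_Collect_conj closed_Collect_all closed_Collect_le closed_Collect_eq continuous_intros)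
  moreover have "stochastic_matrices \<subseteq> cbox 0 (1 :: real^('k \<times> 'l))"
  proof
    fix b :: "real^('k \<times> 'l)" assume b: "b \<in> stochastic_matrices"
    have "b $ (u, x) \<le> (\<Sum>x\<in>UNIV. b $ (u, x))" for u x
      using b by (intro member_le_sum) (auto simp: stochastic_matrices_def)
    then have "b $ k \<le> 1" for k using b by (cases k) (simp add: stochastic_matrices_def)
    then show "b \<in> cbox 0 1" using b by (simp add: mem_box_cart stochastic_matrices_def)
  qed
  ultimately show ?thesis using bounded_subset bounded_cbox compact_eq_bounded_closed by blast
qed

definition vx_objective_vec :: "real \<Rightarrow> ('x::finite \<Rightarrow> 'y::finite \<Rightarrow> real) \<Rightarrow> ('x \<Rightarrow> 'z::finite \<Rightarrow> real)
    \<Rightarrow> (real^'u::finite) \<times> (real^('u \<times> 'x)) \<Rightarrow> real" where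
  "vx_objective_vec mu W Wz p = mu * IXY_plogp W (\<lambda>x. \<Sum>u\<in>UNIV. fst p $ u * snd p $ (u, x))
      + (\<Sum>u\<in>UNIV. fst p $ u * (IXY_plogp W (\<lambda>x. snd p $ (u, x)) - IXY_plogp Wz (\<lambda>x. snd p $ (u, x))))"

lemma continuous_on_vx_objective_vec: "continuous_on S (vx_objective_vec mu W Wz)"
  unfolding vx_objective_vec_def IXY_plogp_def by (intro continuous_intros)

lemma vx_objective_vec_eq:
  assumes p: "p \<in> pmf_vectors \<times> stochastic_matrices" and W: "channel W" and Wz: "channel Wz"
  shows "vx_objective_vec mu W Wz p = vx_objective mu W Wz UNIV (\<lambda>u. fst p $ u) (\<lambda>u x. snd p $ (u, x))"
proof -
  have a: "\<forall>u. fst p $ u \<ge> 0" and b: "\<forall>u x. snd p $ (u, x) \<ge> 0"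
    using p by (auto simp: pmf_vectors_def stochastic_matrices_def)
  then have "\<forall>x. mixture UNIV (\<lambda>u. fst p $ u) (\<lambda>u x. snd p $ (u, x)) x \<ge> 0"
    unfolding mixture_def by (auto intro!: sum_nonneg)
  then show ?thesis
    unfolding vx_objective_vec_def vx_objective_def info_gap_def
    using IXY_eq_plogp[OF _ W] IXY_eq_plogp[OF _ Wz] b by (simp add: mixture_def)
qed

lemma vx_objective_reindex:
  assumes "bij_betw g B A"
  shows "vx_objective mu W Wz B (\<lambda>k. w (g k)) (\<lambda>k. P (g k)) = vx_objective mu W Wz A w P"
  unfolding vx_objective_def mixture_reindex[OF assms]
    sum.reindex_bij_betw[OF assms, of "\<lambda>i. w i * info_gap W Wz (P i)"] ..

lemma sum_lessThan_if_less:
  fixes f :: "nat \<Rightarrow> 'a::comm_monoid_add"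
  assumes "m \<le> N"
  shows "(\<Sum>k<N. if k < m then f k else 0) = (\<Sum>k<m. f k)"
proof -
  have "(\<Sum>k<N. if k < m then f k else 0) = sum f ({..<N} \<inter> {k. k < m})"
    by (simp add: sum.inter_restrict)
  also have "{..<N} \<inter> {k. k < m} = {..<m}" using assms by auto
  finally show ?thesis .
qed

lemma vx_objective_pad:
  fixes m N :: nat
  assumes "m \<le> N"
  shows "vx_objective mu W Wz {..<N} (\<lambda>k. if k < m then w k else 0) (\<lambda>k. if k < m then P k else Q)
       = vx_objective mu W Wz {..<m} w P"
proof -
  show ?thesis
    unfolding vx_objective_def mixture_def
    by (simp add: if_distrib[of "\<lambda>t. t * _"] sum_lessThan_if_less[OF assms] cong: if_cong)
qed

lemma VX_values_subset_image:
  fixes W :: "'x::finite \<Rightarrow> 'y::finite \<Rightarrow> real" and Wz :: "'x \<Rightarrow> 'z::finite \<Rightarrow> real"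
  assumes W: "channel W" and Wz: "channel Wz"
  shows "VX_values W Wz mu
         \<subseteq> vx_objective_vec mu W Wz ` (pmf_vectors \<times> stochastic_matrices :: ((real^'x) \<times> (real^('x \<times> 'x))) set)"
proof
  fix t assume "t \<in> VX_values W Wz mu"
  then obtain m pU pXU where m: "m \<le> CARD('x)" and pU: "is_pmf {..<m} pU"
    and pXU: "\<forall>u<m. is_pmf UNIV (pXU u)"
    and t: "t = obj mu W Wz {..<m} (UNIV::'x set) (\<lambda>u v x. pU u * pXU u x * point_mass v x)"
    unfolding VX_values_def by blast
  obtain g where g: "bij_betw g {..<CARD('x)} (UNIV :: 'x set)"
    using ex_bij_betw_nat_finite[of "UNIV :: 'x set"] unfolding lessThan_atLeast0 by auto
  define h where "h = inv_into {..<CARD('x)} g"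
  have h: "bij_betw h (UNIV :: 'x set) {..<CARD('x)}" unfolding h_def by (rule bij_betw_inv_into[OF g])
  define pU' where "pU' = (\<lambda>k. if k < m then pU k else 0)"
  define pXU' where "pXU' = (\<lambda>k. if k < m then pXU k else point_mass undefined)"
  define p where "p = ((\<chi> u. pU' (h u)) :: real^'x, (\<chi> k. pXU' (h (fst k)) (snd k)) :: real^('x \<times> 'x))"
  have "(\<Sum>u\<in>UNIV. pU' (h u)) = (\<Sum>k<CARD('x). pU' k)" by (rule sum.reindex_bij_betw[OF h])
  also have "\<dots> = 1" using pU by (simp add: pU'_def is_pmf_def sum_lessThan_if_less[OF m])
  moreover have "is_pmf UNIV (pXU' k)" for k
    using pXU by (simp add: pXU'_def point_mass_is_pmf)
  ultimately have p_dom: "p \<in> pmf_vectors \<times> stochastic_matrices"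
    using pU by (auto simp: p_def pmf_vectors_def stochastic_matrices_def pU'_def is_pmf_def)
  have "t = vx_objective mu W Wz {..<m} pU pXU"
    unfolding t using obj_V_eq_X[OF finite_lessThan pU _ W Wz] pXU by simp
  also have "\<dots> = vx_objective mu W Wz {..<CARD('x)} pU' pXU'"
    unfolding pU'_def pXU'_def by (rule vx_objective_pad[OF m, symmetric])
  also have "\<dots> = vx_objective mu W Wz UNIV (\<lambda>u. pU' (h u)) (\<lambda>u. pXU' (h u))"
    by (rule vx_objective_reindex[OF h, symmetric])
  also have "\<dots> = vx_objective_vec mu W Wz p"
    using vx_objective_vec_eq[OF p_dom W Wz] by (simp add: p_def)
  finally have "t = vx_objective_vec mu W Wz p" .
  with p_dom show "t \<in> vx_objective_vec mu W Wz ` (pmf_vectors \<times> stochastic_matrices :: ((real^'x) \<times> _) set)"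
    by blast
qed

lemma image_subset_VX_values:
  fixes W :: "'x::finite \<Rightarrow> 'y::finite \<Rightarrow> real" and Wz :: "'x \<Rightarrow> 'z::finite \<Rightarrow> real"
  assumes W: "channel W" and Wz: "channel Wz"
  shows "vx_objective_vec mu W Wz ` (pmf_vectors \<times> stochastic_matrices :: ((real^'x) \<times> (real^('x \<times> 'x))) set)
         \<subseteq> VX_values W Wz mu"
proof
  fix t assume "t \<in> vx_objective_vec mu W Wz ` (pmf_vectors \<times> stochastic_matrices :: ((real^'x) \<times> _) set)"
  then obtain p :: "(real^'x) \<times> (real^('x \<times> 'x))"
    where p: "p \<in> pmf_vectors \<times> stochastic_matrices" and t: "t = vx_objective_vec mu W Wz p" by blast
  obtain g where g: "bij_betw g {..<CARD('x)} (UNIV :: 'x set)"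
    using ex_bij_betw_nat_finite[of "UNIV :: 'x set"] unfolding lessThan_atLeast0 by auto
  define pU where "pU = (\<lambda>k. fst p $ g k)"
  define pXU where "pXU = (\<lambda>k x. snd p $ (g k, x))"
  have pU_pmf: "is_pmf {..<CARD('x)} pU"
    using p sum.reindex_bij_betw[OF g, of "\<lambda>u. fst p $ u"] by (auto simp: is_pmf_def pU_def pmf_vectors_def)
  have pXU_pmf: "\<forall>u<CARD('x). is_pmf UNIV (pXU u)"
    using p by (auto simp: is_pmf_def pXU_def stochastic_matrices_def)
  have "t = vx_objective mu W Wz UNIV (\<lambda>u. fst p $ u) (\<lambda>u x. snd p $ (u, x))"
    unfolding t by (rule vx_objective_vec_eq[OF p W Wz])
  also have "\<dots> = vx_objective mu W Wz {..<CARD('x)} pU pXU"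
    unfolding pU_def pXU_def by (rule vx_objective_reindex[OF g, symmetric])
  also have "\<dots> = obj mu W Wz {..<CARD('x)} (UNIV::'x set) (\<lambda>u v x. pU u * pXU u x * point_mass v x)"
    using obj_V_eq_X[OF finite_lessThan pU_pmf _ W Wz] pXU_pmf by simp
  finally show "t \<in> VX_values W Wz mu"
    unfolding VX_values_def using pU_pmf pXU_pmf by blast
qed

lemma VX_values_has_max:
  fixes W :: "'x::finite \<Rightarrow> 'y::finite \<Rightarrow> real" and Wz :: "'x \<Rightarrow> 'z::finite \<Rightarrow> real"
  assumes W: "channel W" and Wz: "channel Wz"
  shows "\<exists>M\<in>VX_values W Wz mu. \<forall>t\<in>VX_values W Wz mu. t \<le> M"
proof (rule compact_attains_sup)
  let ?D = "pmf_vectors \<times> stochastic_matrices :: ((real^'x) \<times> (real^('x \<times> 'x))) set"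
  have VX: "VX_values W Wz mu = vx_objective_vec mu W Wz ` ?D"
    using VX_values_subset_image[OF W Wz] image_subset_VX_values[OF W Wz] by blast
  have "compact ?D" by (intro compact_Times compact_pmf_vectors compact_stochastic_matrices)
  then show "compact (VX_values W Wz mu)"
    unfolding VX by (rule compact_continuous_image[OF continuous_on_vx_objective_vec])
  have "((\<chi> u. if u = undefined then 1 else 0), (\<chi> k. if snd k = undefined then 1 else 0)) \<in> ?D"
    by (simp add: pmf_vectors_def stochastic_matrices_def)
  then show "VX_values W Wz mu \<noteq> {}" unfolding VX by blast
qed

section \<open>The boundary of the rate-equivocation region\<close>

lemma vx_objective_le_VX_value:
  fixes W :: "'x::finite \<Rightarrow> 'y::finite \<Rightarrow> real" and Wz :: "'x \<Rightarrow> 'z::finite \<Rightarrow> real"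
    and m :: nat
  assumes W: "channel W" and Wz: "channel Wz"
    and pU: "is_pmf {..<m} pU" and P_pmf: "\<forall>u\<in>{..<m}. is_pmf UNIV (P u)"
  shows "\<exists>t\<in>VX_values W Wz mu. vx_objective mu W Wz {..<m} pU P \<le> t"
proof -
  have P_sum: "\<forall>u\<in>{..<m}. sum (P u) UNIV = 1" using P_pmf by (simp add: is_pmf_def)
  have pU_nonneg: "\<forall>u\<in>{..<m}. pU u \<ge> 0" using pU by (simp add: is_pmf_def)
  obtain J w where J: "J \<subseteq> {..<m}" "card J \<le> CARD('x)" and w: "\<forall>i\<in>J. w i \<ge> 0"
    and mix: "mixture J w P = mixture {..<m} pU P"
    and gap: "(\<Sum>i\<in>{..<m}. pU i * info_gap W Wz (P i)) \<le> (\<Sum>i\<in>J. w i * info_gap W Wz (P i))"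
    using mixture_support_reduction[OF finite_lessThan pU_nonneg P_sum,
        where F = "\<lambda>i. info_gap W Wz (P i)"] by blast
  obtain g where g: "bij_betw g {..<card J} J"
    using ex_bij_betw_nat_finite[OF finite_subset[OF J(1)]] unfolding lessThan_atLeast0 by auto
  have "(\<Sum>k<card J. w (g k)) = sum w J" by (rule sum.reindex_bij_betw[OF g])
  also have "\<dots> = sum (mixture J w P) UNIV"
    using P_sum J(1) by (intro sum_mixture[symmetric]) auto
  also have "\<dots> = sum pU {..<m}" unfolding mix using P_sum by (rule sum_mixture)
  finally have w_pmf: "is_pmf {..<card J} (\<lambda>k. w (g k))"
    using pU w bij_betwE[OF g] by (simp add: is_pmf_def)
  have "g k \<in> {..<m}" if "k < card J" for k using that J(1) bij_betwE[OF g] by blast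
  then have P_g_pmf: "\<forall>k<card J. is_pmf UNIV (P (g k))" using P_pmf by blast
  have "vx_objective mu W Wz {..<m} pU P \<le> vx_objective mu W Wz J w P"
    unfolding vx_objective_def mix using gap by simp
  also have "\<dots> = vx_objective mu W Wz {..<card J} (\<lambda>k. w (g k)) (\<lambda>k. P (g k))"
    by (rule vx_objective_reindex[OF g, symmetric])
  also have "\<dots> = obj mu W Wz {..<card J} (UNIV::'x set) (\<lambda>u v x. w (g u) * P (g u) x * point_mass v x)"
    using obj_V_eq_X[OF finite_lessThan w_pmf _ W Wz] P_g_pmf by simp
  finally have "vx_objective mu W Wz {..<m} pU P
      \<le> obj mu W Wz {..<card J} (UNIV::'x set) (\<lambda>u v x. w (g u) * P (g u) x * point_mass v x)" .
  moreover have "\<dots> \<in> VX_values W Wz mu"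
    unfolding VX_values_def using J(2) w_pmf P_g_pmf
    by (intro CollectI exI[of _ "card J"] exI[of _ "\<lambda>k. w (g k)"] exI[of _ "\<lambda>k. P (g k)"]) simp
  ultimately show ?thesis by blast
qed

lemma obj_le_VX_value:
  fixes W :: "'x::finite \<Rightarrow> 'y::finite \<Rightarrow> real" and Wz :: "'x \<Rightarrow> 'z::finite \<Rightarrow> real"
    and m n :: nat
  assumes W: "channel W" and Wz: "channel Wz" and mc: "more_capable W Wz" and mu: "mu \<ge> 0"
    and pU: "is_pmf {..<m} pU" and pVU: "\<forall>u<m. is_pmf {..<n} (pVU u)"
    and pXV: "\<forall>v<n. is_pmf UNIV (pXV v)"
  shows "\<exists>t\<in>VX_values W Wz mu. obj mu W Wz {..<m} {..<n} (\<lambda>u v x. pU u * pVU u v * pXV v x) \<le> t"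
proof -
  have mixture_pmf: "\<forall>u\<in>{..<m}. is_pmf UNIV (mixture {..<n} (pVU u) pXV)"
    using pVU pXV by (intro ballI mixture_is_pmf) auto
  obtain t where "t \<in> VX_values W Wz mu"
    and "vx_objective mu W Wz {..<m} pU (\<lambda>u. mixture {..<n} (pVU u) pXV) \<le> t"
    using vx_objective_le_VX_value[OF W Wz pU mixture_pmf] by blast
  moreover have "obj mu W Wz {..<m} {..<n} (\<lambda>u v x. pU u * pVU u v * pXV v x)
      \<le> vx_objective mu W Wz {..<m} pU (\<lambda>u. mixture {..<n} (pVU u) pXV)"
    by (rule obj_le_vx_objective[OF finite_lessThan finite_lessThan pU _ _ W Wz mc mu])
      (use pVU pXV in auto)
  ultimately show ?thesis by (blast intro: order_trans)
qed

lemma VX_value_is_obj_value: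
  fixes W :: "'x::finite \<Rightarrow> 'y::finite \<Rightarrow> real" and Wz :: "'x \<Rightarrow> 'z::finite \<Rightarrow> real"
  assumes W: "channel W" and Wz: "channel Wz" and t: "t \<in> VX_values W Wz mu"
  shows "\<exists>(m::nat) (n::nat) pU pVU pXV. is_pmf {..<m} pU \<and> (\<forall>u<m. is_pmf {..<n} (pVU u))
           \<and> (\<forall>v<n. is_pmf UNIV (pXV v)) \<and> t = obj mu W Wz {..<m} {..<n} (\<lambda>u v x. pU u * pVU u v * pXV v x)"
proof -
  obtain m pU pXU where "m \<le> CARD('x)" and pU: "is_pmf {..<m} pU" and pXU: "\<forall>u<m. is_pmf UNIV (pXU u)"
    and t: "t = obj mu W Wz {..<m} (UNIV::'x set) (\<lambda>u v x. pU u * pXU u x * point_mass v x)"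
    using t unfolding VX_values_def by blast
  obtain g where g: "bij_betw g {..<CARD('x)} (UNIV :: 'x set)"
    using ex_bij_betw_nat_finite[of "UNIV :: 'x set"] unfolding lessThan_atLeast0 by auto
  have "t = vx_objective mu W Wz {..<m} pU pXU"
    unfolding t using obj_V_eq_X[OF finite_lessThan pU _ W Wz] pXU by simp
  also have "\<dots> = obj mu W Wz {..<m} {..<CARD('x)} (\<lambda>u v x. pU u * pXU u (g v) * point_mass (g v) x)"
    using obj_relabelled_V_eq_X[OF finite_lessThan pU _ W Wz finite_lessThan g] pXU by simp
  moreover have "is_pmf {..<CARD('x)} (\<lambda>v. pXU u (g v))" if "u < m" for u
    using pXU that sum.reindex_bij_betw[OF g, of "pXU u"] by (simp add: is_pmf_def)
  ultimately show ?thesis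
    using pU by (intro exI[of _ m] exI[of _ "CARD('x)"] exI[of _ pU] exI[of _ "\<lambda>u v. pXU u (g v)"]
        exI[of _ "\<lambda>v. point_mass (g v)"]) (simp add: point_mass_is_pmf)
qed

lemma Phi_is_max_of_VX_values:
  fixes W :: "'x::finite \<Rightarrow> 'y::finite \<Rightarrow> real" and Wz :: "'x \<Rightarrow> 'z::finite \<Rightarrow> real"
  assumes W: "channel W" and Wz: "channel Wz" and mc: "more_capable W Wz" and mu: "mu \<ge> 0"
  shows "Phi W Wz mu \<in> VX_values W Wz mu \<and> (\<forall>s\<in>VX_values W Wz mu. s \<le> Phi W Wz mu)"
proof -
  obtain M where M: "M \<in> VX_values W Wz mu" "\<forall>t\<in>VX_values W Wz mu. t \<le> M"
    using VX_values_has_max[OF W Wz] by blast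
  have le_M: "obj mu W Wz {..<m} {..<n} (\<lambda>u v x. pU u * pVU u v * pXV v x) \<le> M"
    if "is_pmf {..<m} pU" "\<forall>u<m. is_pmf {..<n} (pVU u)" "\<forall>v<n. is_pmf UNIV (pXV v)"
    for m n :: nat and pU pVU pXV
    using obj_le_VX_value[OF W Wz mc mu that] M(2) by fastforce
  have "Phi W Wz mu = M"
    unfolding Phi_def using VX_value_is_obj_value[OF W Wz M(1)] le_M
    by (intro cSup_eq_maximum) blast+
  then show ?thesis using M by simp
qed

lemma V_beats_X_if_not_more_capable:
  fixes W :: "'x::finite \<Rightarrow> 'y::finite \<Rightarrow> real" and Wz :: "'x \<Rightarrow> 'z::finite \<Rightarrow> real"
  assumes W: "channel W" and Wz: "channel Wz" and nmc: "\<not> more_capable W Wz"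
    and Ps: "is_pmf UNIV Ps" "\<forall>x. Ps x > 0"
    and Ps_max: "\<forall>P. is_pmf UNIV P \<longrightarrow> IXY P W - IXY P Wz \<le> IXY Ps W - IXY Ps Wz"
  shows "\<exists>(n::nat) pV pXV. is_pmf {..<n} pV \<and> (\<forall>v<n. is_pmf UNIV (pXV v)) \<and>
           mi {..<n} UNIV (\<lambda>v y. \<Sum>x\<in>UNIV. pV v * pXV v x * W x y)
           - mi {..<n} UNIV (\<lambda>v z. \<Sum>x\<in>UNIV. pV v * pXV v x * Wz x z)
           > (GREATEST f. \<exists>P. is_pmf UNIV P \<and> f = IXY P W - IXY P Wz)"
proof -
  obtain Q where Q: "is_pmf UNIV Q" "info_gap W Wz Q < 0"
    using nmc unfolding more_capable_def info_gap_def by force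
  have "(GREATEST f. \<exists>P. is_pmf UNIV P \<and> f = IXY P W - IXY P Wz) = info_gap W Wz Ps"
    unfolding info_gap_def using Ps Ps_max by (intro Greatest_equality) auto
  then show ?thesis using V_exceeds_info_gap_of_full_support[OF W Wz Q Ps] by simp
qed

theorem theorem2:
  fixes W :: "'x::finite \<Rightarrow> 'y::finite \<Rightarrow> real" and Wz :: "'x \<Rightarrow> 'z::finite \<Rightarrow> real"
  assumes "channel W" and "channel Wz"
  shows "(more_capable W Wz \<longrightarrow>
            (\<forall>mu::real. mu \<ge> 0 \<longrightarrow>
               Phi W Wz mu \<in> VX_values W Wz mu \<and> (\<forall>s\<in>VX_values W Wz mu. s \<le> Phi W Wz mu)))
       \<and> ((\<not> more_capable W Wz \<and>
            (\<exists>Ps. is_pmf UNIV Ps \<and> (\<forall>x. Ps x > 0) \<and>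
                  (\<forall>P. is_pmf UNIV P \<longrightarrow> IXY P W - IXY P Wz \<le> IXY Ps W - IXY Ps Wz)))
          \<longrightarrow> (\<exists>(n::nat) pV pXV. is_pmf {..<n} pV \<and> (\<forall>v<n. is_pmf UNIV (pXV v)) \<and>
                 mi {..<n} UNIV (\<lambda>v y. \<Sum>x\<in>UNIV. pV v * pXV v x * W x y)
                 - mi {..<n} UNIV (\<lambda>v z. \<Sum>x\<in>UNIV. pV v * pXV v x * Wz x z)
                 > (GREATEST f. \<exists>P. is_pmf UNIV P \<and> f = IXY P W - IXY P Wz)))"
proof (rule conjI; intro impI allI)
  fix mu :: real
  assume "more_capable W Wz" and "mu \<ge> 0"
  then show "Phi W Wz mu \<in> VX_values W Wz mu \<and> (\<forall>s\<in>VX_values W Wz mu. s \<le> Phi W Wz mu)"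
    by (rule Phi_is_max_of_VX_values[OF assms])
next
  assume "\<not> more_capable W Wz \<and> (\<exists>Ps. is_pmf UNIV Ps \<and> (\<forall>x. Ps x > 0) \<and>
            (\<forall>P. is_pmf UNIV P \<longrightarrow> IXY P W - IXY P Wz \<le> IXY Ps W - IXY Ps Wz))"
  then show "\<exists>(n::nat) pV pXV. is_pmf {..<n} pV \<and> (\<forall>v<n. is_pmf UNIV (pXV v)) \<and>
                 mi {..<n} UNIV (\<lambda>v y. \<Sum>x\<in>UNIV. pV v * pXV v x * W x y)
                 - mi {..<n} UNIV (\<lambda>v z. \<Sum>x\<in>UNIV. pV v * pXV v x * Wz x z)
                 > (GREATEST f. \<exists>P. is_pmf UNIV P \<and> f = IXY P W - IXY P Wz)"
    using V_beats_X_if_not_more_capable[OF assms] by blast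
qed

end
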